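(* Let $H$ be a Hilbert space, $K\subset H$ a compact set, $C\ge1$ and $n\in\mathbb N$. Then $$ e^{\rm cont}_{4n+1}(K,H)\le 2C\, e^{\rm non}_{n,C}(K,H). $$
   Context: A sequence $\mathcal B=\{h_1,h_2,\dots\}\subset H$ is a Riesz basis of $H$ if finite linear combinations are dense in $H$ and there are constants $0<A\le B$ with $A(\sum_k|\alpha_k|^2)^{1/2}\le\|\sum_k\alpha_kh_k\|_H\le B(\sum_k|\alpha_k|^2)^{1/2}$ for all finitely supported scalar sequences; $A,B$ denote the optimal such constants. For $C\ge1$, $\mathcal B_C$ is the set of Riesz bases of $H$ with $B/A\le C$. Best $n$-term approximation: $\sigma_n(u,\mathcal B)_H=\inf_{i_1,\dots,i_n}\inf_{c_1,\dots,c_n}\|u-\sum_{k=1}^nc_kh_{i_k}\|_H$. Define $e^{\rm non}_{n,C}(K,H)=\inf_{\mathcal B\in\mathcal B_C}\sup_{u\in K}\sigma_n(u,\mathcal B)_H$ and $e^{\rm cont}_n(K,H)=\inf_{N_n,\varphi_n}\sup_{u\in K}\|\varphi_n(N_n(u))-u\|_H$, where the infimum is over all continuous maps $N_n:K\to\mathbb R^n$ and $\varphi_n:\mathbb R^n\to H$. *)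

theory Defs
  imports "HOL-Analysis.Analysis"
begin

definition riesz_ratios :: "(nat \<Rightarrow> 'a::real_normed_vector) \<Rightarrow> real set" where
  "riesz_ratios h = {norm (\<Sum>k\<in>F. \<alpha> k *\<^sub>R h k) / sqrt (\<Sum>k\<in>F. (\<alpha> k)\<^sup>2) | F \<alpha>.
       finite F \<and> (\<exists>k\<in>F. \<alpha> k \<noteq> 0)}"

definition riesz_A :: "(nat \<Rightarrow> 'a::real_normed_vector) \<Rightarrow> real" where
  "riesz_A h = Inf (riesz_ratios h)"

definition riesz_B :: "(nat \<Rightarrow> 'a::real_normed_vector) \<Rightarrow> real" where
  "riesz_B h = Sup (riesz_ratios h)"

definition riesz_basis :: "(nat \<Rightarrow> 'a::real_normed_vector) \<Rightarrow> bool" where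
  "riesz_basis h \<longleftrightarrow> closure (span (range h)) = UNIV
      \<and> bdd_above (riesz_ratios h) \<and> riesz_A h > 0"

definition riesz_bases_C :: "real \<Rightarrow> (nat \<Rightarrow> 'a::real_normed_vector) set" where
  "riesz_bases_C C = {h. riesz_basis h \<and> riesz_B h / riesz_A h \<le> C}"

definition sigma_n :: "nat \<Rightarrow> 'a::real_normed_vector \<Rightarrow> (nat \<Rightarrow> 'a) \<Rightarrow> ennreal" where
  "sigma_n n u h = (INF i\<in>(UNIV :: (nat \<Rightarrow> nat) set). INF c\<in>(UNIV :: (nat \<Rightarrow> real) set).
       ennreal (norm (u - (\<Sum>k<n. c k *\<^sub>R h (i k)))))"

definition e_non :: "nat \<Rightarrow> real \<Rightarrow> 'a::real_normed_vector set \<Rightarrow> ennreal" where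
  "e_non n C K = (INF h\<in>riesz_bases_C C. SUP u\<in>K. sigma_n n u h)"

text \<open>R^n realised as the subspace of nat \<Rightarrow> real (product topology) of
  sequences vanishing from index n on.\<close>
definition Rn :: "nat \<Rightarrow> (nat \<Rightarrow> real) set" where
  "Rn n = {x. \<forall>k\<ge>n. x k = 0}"

definition e_cont :: "nat \<Rightarrow> 'a::real_normed_vector set \<Rightarrow> ennreal" where
  "e_cont n K = (INF p\<in>{(N, \<phi>). continuous_on K N \<and> N ` K \<subseteq> Rn n \<and> continuous_on (Rn n) \<phi>}.
       SUP u\<in>K. ennreal (norm ((snd p) ((fst p) u) - u)))"

end

(*
  Fix a Riesz basis h with B/A <= C such that every u in K has an n-term approximation
  within delta. By compactness all these approximations use only h 0, ..., h (M - 1) for a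
  single M. Encode u by the coefficients x of its orthogonal projection onto the span of
  these vectors, soft-thresholded at the (2n+1)-st largest |x k|. This is continuous, leaves
  at most 2n nonzero coefficients, and the Riesz bounds show that the expansion it produces
  is within sqrt 2 * C * delta of u: at most n of the 2n+1 largest coefficients can be used
  by a competing n-term approximation, so the clipped part is controlled by its error.
  A 2n-sparse vector supported below M is determined by its power moments
  sum_k y k * k^j for j < 4n (Vandermonde), so the moment map is a continuous injection on
  the compact set of encodings; its inverse is continuous, and Tietze's theorem extends the
  resulting decoder to the whole coordinate space.
*)

theory Submission
  imports Defs "HOL-Computational_Algebra.Polynomial"
begin

lemma continuous_on_Max_image:
  fixes f :: "'i \<Rightarrow> 'x::topological_space \<Rightarrow> real"
  assumes "finite I" "I \<noteq> {}" "\<And>i. i \<in> I \<Longrightarrow> continuous_on S (f i)"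
  shows "continuous_on S (\<lambda>x. Max ((\<lambda>i. f i x) ` I))"
  using assms
proof (induction I rule: finite_ne_induct)
  case (insert i I)
  then have "continuous_on S (\<lambda>x. max (f i x) (Max ((\<lambda>i. f i x) ` I)))"
    by (intro continuous_on_max) auto
  with insert show ?case by simp
qed simp

lemma continuous_on_Min_image:
  fixes f :: "'i \<Rightarrow> 'x::topological_space \<Rightarrow> real"
  assumes "finite I" "I \<noteq> {}" "\<And>i. i \<in> I \<Longrightarrow> continuous_on S (f i)"
  shows "continuous_on S (\<lambda>x. Min ((\<lambda>i. f i x) ` I))"
  using assms
proof (induction I rule: finite_ne_induct)
  case (insert i I)
  then have "continuous_on S (\<lambda>x. min (f i x) (Min ((\<lambda>i. f i x) ` I)))"
    by (intro continuous_on_min) auto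
  with insert show ?case by simp
qed simp

lemma continuous_factor_through_inj_on:
  fixes L :: "'a::topological_space \<Rightarrow> 'b::{metric_space, second_countable_topology}"
    and g :: "'a \<Rightarrow> 'c::real_inner"
  assumes "compact Q" "continuous_on Q L" "inj_on L Q" "continuous_on Q g"
  obtains \<phi> where "continuous_on UNIV \<phi>" "\<And>y. y \<in> Q \<Longrightarrow> \<phi> (L y) = g y"
proof -
  define L' where "L' = the_inv_into Q L"
  have L'L: "L' (L y) = y" if "y \<in> Q" for y
    unfolding L'_def using assms(3) that by (rule the_inv_into_f_f)
  have "continuous_on (L ` Q) L'"
    using assms(1,2) L'L by (intro continuous_on_inv) auto
  then have "continuous_on (L ` Q) (g \<circ> L')"
    using assms(4) L'L by (intro continuous_on_compose) (auto simp: image_image)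
  moreover have "closedin (top_of_set UNIV) (L ` Q)"
    using assms(1,2) by (simp add: compact_continuous_image compact_imp_closed)
  ultimately obtain \<phi> where "continuous_on UNIV \<phi>" "\<And>z. z \<in> L ` Q \<Longrightarrow> \<phi> z = (g \<circ> L') z"
    by (rule Tietze_unbounded) blast
  with L'L show ?thesis by (intro that) auto
qed

section \<open>Orthogonal projection onto a finite span\<close>

lemma span_image_eq_range_sum:
  fixes h :: "'i \<Rightarrow> 'a::real_vector"
  assumes "finite I"
  shows "span (h ` I) = range (\<lambda>\<beta>. \<Sum>k\<in>I. \<beta> k *\<^sub>R h k)"
proof
  have "subspace (range (\<lambda>\<beta>. \<Sum>k\<in>I. \<beta> k *\<^sub>R h k))"
    unfolding subspace_def
  proof (safe intro!: rev_image_eqI)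
    show "0 = (\<Sum>k\<in>I. 0 *\<^sub>R h k)" by simp
    fix \<beta> \<gamma> :: "'i \<Rightarrow> real" and c :: real
    show "(\<Sum>k\<in>I. \<beta> k *\<^sub>R h k) + (\<Sum>k\<in>I. \<gamma> k *\<^sub>R h k) = (\<Sum>k\<in>I. (\<beta> k + \<gamma> k) *\<^sub>R h k)"
      by (simp add: scaleR_add_left sum.distrib)
    show "c *\<^sub>R (\<Sum>k\<in>I. \<beta> k *\<^sub>R h k) = (\<Sum>k\<in>I. (c * \<beta> k) *\<^sub>R h k)"
      by (simp add: scaleR_sum_right)
  qed auto
  moreover have "h j \<in> range (\<lambda>\<beta>. \<Sum>k\<in>I. \<beta> k *\<^sub>R h k)" if "j \<in> I" for j
  proof (intro rev_image_eqI)
    have "(\<Sum>k\<in>I. (if k = j then 1 else 0) *\<^sub>R h k) = (\<Sum>k\<in>I. if k = j then h k else 0)"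
      by (intro sum.cong) auto
    with assms that show "h j = (\<Sum>k\<in>I. (if k = j then 1 else 0) *\<^sub>R h k)"
      by simp
  qed simp
  ultimately show "span (h ` I) \<subseteq> range (\<lambda>\<beta>. \<Sum>k\<in>I. \<beta> k *\<^sub>R h k)"
    by (intro span_minimal) auto
  show "range (\<lambda>\<beta>. \<Sum>k\<in>I. \<beta> k *\<^sub>R h k) \<subseteq> span (h ` I)"
    by (auto intro!: span_sum intro: span_scale span_base)
qed

lemma span_insert_scaleR:
  assumes "c \<noteq> 0"
  shows "span (insert (c *\<^sub>R w) E) = span (insert w E)"
proof -
  have "(\<exists>k. x - k *\<^sub>R (c *\<^sub>R w) \<in> span E) \<longleftrightarrow> (\<exists>k. x - k *\<^sub>R w \<in> span E)" for x
  proof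
    assume "\<exists>k. x - k *\<^sub>R (c *\<^sub>R w) \<in> span E"
    then show "\<exists>k. x - k *\<^sub>R w \<in> span E" by auto
  next
    assume "\<exists>k. x - k *\<^sub>R w \<in> span E"
    then obtain k where "x - k *\<^sub>R w \<in> span E" by blast
    with assms have "x - (k / c) *\<^sub>R (c *\<^sub>R w) \<in> span E" by simp
    then show "\<exists>k. x - k *\<^sub>R (c *\<^sub>R w) \<in> span E" by blast
  qed
  then show ?thesis by (simp add: span_insert)
qed

definition orthonormal :: "'a::real_inner set \<Rightarrow> bool" where
  "orthonormal E \<longleftrightarrow> (\<forall>e\<in>E. norm e = 1) \<and> pairwise orthogonal E"

definition ortho_proj :: "'a::real_inner set \<Rightarrow> 'a \<Rightarrow> 'a" where
  "ortho_proj E u = (\<Sum>e\<in>E. (u \<bullet> e) *\<^sub>R e)"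

lemma inner_sum_orthonormal:
  assumes "orthonormal E" "finite E" "e \<in> E"
  shows "(\<Sum>e'\<in>E. a e' *\<^sub>R e') \<bullet> e = a e"
proof -
  have "(\<Sum>e'\<in>E. a e' *\<^sub>R e') \<bullet> e = (\<Sum>e'\<in>E. if e' = e then a e else 0)"
    unfolding inner_sum_left using assms
    by (intro sum.cong) (auto simp: orthonormal_def pairwise_def orthogonal_def norm_eq_1)
  with assms show ?thesis by simp
qed

lemma ortho_proj_in_span: "ortho_proj E u \<in> span E"
  unfolding ortho_proj_def by (intro span_sum span_scale span_base)

lemma orthogonal_ortho_proj:
  assumes "orthonormal E" "finite E" "v \<in> span E"
  shows "orthogonal (u - ortho_proj E u) v"
proof (rule orthogonal_to_span[OF assms(3)])
  fix e assume "e \<in> E"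
  with assms show "orthogonal (u - ortho_proj E u) e"
    by (simp add: orthogonal_def inner_diff_left ortho_proj_def inner_sum_orthonormal)
qed

lemma orthonormal_basis_of_span:
  fixes S :: "'a::real_inner set"
  assumes "finite S"
  obtains E where "finite E" "orthonormal E" "span E = span S"
  using assms
proof (induction S arbitrary: thesis rule: finite_induct)
  case empty
  show ?case by (rule empty.prems[of "{}"]) (auto simp: orthonormal_def)
next
  case (insert v S)
  obtain E where E: "finite E" "orthonormal E" "span E = span S"
    using insert.IH by blast
  define w where "w = v - ortho_proj E v"
  have "span (insert w E) = span (insert v E)"
    by (rule eq_span_insert_eq) (simp add: w_def span_neg ortho_proj_in_span)
  also have "\<dots> = span (insert v S)"
    using E(3) by (simp add: span_insert)
  finally have span_w: "span (insert w E) = span (insert v S)" .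
  show ?case
  proof (cases "w = 0")
    case True
    then have "span (insert v S) = span S"
      using E(3) span_w by simp
    with E show ?thesis by (intro insert.prems[of E]) auto
  next
    case False
    define e where "e = w /\<^sub>R norm w"
    have "orthogonal e e'" if "e' \<in> E" for e'
      using orthogonal_ortho_proj[OF E(2,1) span_base[OF that], of v]
      by (simp add: e_def w_def orthogonal_def)
    then have "orthonormal (insert e E)"
      using E(2) False by (auto simp: orthonormal_def e_def intro!: pairwise_orthogonal_insert)
    moreover have "span (insert e E) = span (insert v S)"
      using False span_w by (simp add: e_def span_insert_scaleR)
    ultimately show ?thesis using E(1) by (intro insert.prems[of "insert e E"]) auto
  qed
qed

lemma continuous_projection_coefficients:
  fixes h :: "nat \<Rightarrow> 'a::real_inner"
  obtains c where "continuous_on UNIV c"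
    "\<And>u v. v \<in> span (h ` {..<M}) \<Longrightarrow> orthogonal (u - (\<Sum>k<M. c u k *\<^sub>R h k)) v"
proof -
  obtain E where E: "finite E" "orthonormal E" "span E = span (h ` {..<M})"
    using orthonormal_basis_of_span[of "h ` {..<M}"] by blast
  have "\<exists>\<beta>. e = (\<Sum>k<M. \<beta> k *\<^sub>R h k)" if "e \<in> E" for e
    using span_base[OF that] E(3) span_image_eq_range_sum[of "{..<M}" h] by auto
  then obtain \<beta> where \<beta>: "\<And>e. e \<in> E \<Longrightarrow> e = (\<Sum>k<M. \<beta> e k *\<^sub>R h k)" by metis
  define c where "c u k = (\<Sum>e\<in>E. (u \<bullet> e) * \<beta> e k)" for u k
  have proj: "(\<Sum>k<M. c u k *\<^sub>R h k) = ortho_proj E u" for u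
  proof -
    have "(\<Sum>k<M. c u k *\<^sub>R h k) = (\<Sum>e\<in>E. (u \<bullet> e) *\<^sub>R (\<Sum>k<M. \<beta> e k *\<^sub>R h k))"
      by (simp add: c_def scaleR_sum_left scaleR_sum_right sum.swap[of _ E])
    also have "\<dots> = ortho_proj E u"
      unfolding ortho_proj_def using \<beta> by (intro sum.cong) auto
    finally show ?thesis .
  qed
  have "continuous_on UNIV c"
    unfolding c_def by (intro continuous_on_coordinatewise_then_product continuous_intros)
  then show ?thesis
  proof (rule that)
    show "orthogonal (u - (\<Sum>k<M. c u k *\<^sub>R h k)) v" if "v \<in> span (h ` {..<M})" for u v
      unfolding proj using orthogonal_ortho_proj[OF E(2,1)] E(3) that by simp
  qed
qed

lemma riesz_basis_bounds:
  fixes h :: "nat \<Rightarrow> 'a::real_normed_vector"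
  assumes "riesz_basis h" "finite F"
  shows "riesz_A h * sqrt (\<Sum>k\<in>F. (\<alpha> k)\<^sup>2) \<le> norm (\<Sum>k\<in>F. \<alpha> k *\<^sub>R h k)"
    and "norm (\<Sum>k\<in>F. \<alpha> k *\<^sub>R h k) \<le> riesz_B h * sqrt (\<Sum>k\<in>F. (\<alpha> k)\<^sup>2)"
proof -
  have "riesz_A h * sqrt (\<Sum>k\<in>F. (\<alpha> k)\<^sup>2) \<le> norm (\<Sum>k\<in>F. \<alpha> k *\<^sub>R h k) \<and>
      norm (\<Sum>k\<in>F. \<alpha> k *\<^sub>R h k) \<le> riesz_B h * sqrt (\<Sum>k\<in>F. (\<alpha> k)\<^sup>2)"
  proof (cases "\<exists>k\<in>F. \<alpha> k \<noteq> 0")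
    case True
    then have pos: "0 < sqrt (\<Sum>k\<in>F. (\<alpha> k)\<^sup>2)"
      using assms(2) by (auto intro!: sum_pos2)
    define r where "r = norm (\<Sum>k\<in>F. \<alpha> k *\<^sub>R h k) / sqrt (\<Sum>k\<in>F. (\<alpha> k)\<^sup>2)"
    have r: "r \<in> riesz_ratios h"
      unfolding riesz_ratios_def r_def using True assms(2) by blast
    have "bdd_below (riesz_ratios h)"
      unfolding riesz_ratios_def
    by (rule bdd_belowI[of _ 0]) (auto intro!: divide_nonneg_nonneg sum_nonneg)
    then have "riesz_A h \<le> r"
      unfolding riesz_A_def using r by (rule cInf_lower[rotated])
    moreover have "r \<le> riesz_B h"
      unfolding riesz_B_def using assms(1) r by (intro cSup_upper) (auto simp: riesz_basis_def)
    ultimately show ?thesis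
      using pos by (simp add: r_def pos_le_divide_eq pos_divide_le_eq)
  qed simp
  then show "riesz_A h * sqrt (\<Sum>k\<in>F. (\<alpha> k)\<^sup>2) \<le> norm (\<Sum>k\<in>F. \<alpha> k *\<^sub>R h k)"
    and "norm (\<Sum>k\<in>F. \<alpha> k *\<^sub>R h k) \<le> riesz_B h * sqrt (\<Sum>k\<in>F. (\<alpha> k)\<^sup>2)"
    by auto
qed

lemma riesz_A_le_B:
  fixes h :: "nat \<Rightarrow> 'a::real_normed_vector"
  assumes "riesz_basis h"
  shows "riesz_A h \<le> riesz_B h"
  using riesz_basis_bounds[OF assms, of "{0}" "\<lambda>_. 1"] by simp

lemma riesz_ratio_bound_ge_1:
  fixes h :: "nat \<Rightarrow> 'a::real_normed_vector"
  assumes "riesz_basis h" "riesz_B h \<le> C * riesz_A h"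
  shows "1 \<le> C"
proof -
  have "0 < riesz_A h"
    using assms(1) by (simp add: riesz_basis_def)
  moreover have "riesz_A h \<le> C * riesz_A h"
    using riesz_A_le_B[OF assms(1)] assms(2) by linarith
  ultimately show ?thesis by simp
qed

lemma riesz_bases_CD:
  assumes "h \<in> riesz_bases_C C"
  shows "riesz_basis h" "riesz_B h \<le> C * riesz_A h"
  using assms by (auto simp: riesz_bases_C_def riesz_basis_def divide_le_eq)

section \<open>Sparse coefficient vectors and their moments\<close>

definition sparse_coeffs :: "nat \<Rightarrow> nat \<Rightarrow> (nat \<Rightarrow> real) set" where
  "sparse_coeffs s M = {y. {k. y k \<noteq> 0} \<subseteq> {..<M} \<and> card {k. y k \<noteq> 0} \<le> s}"

definition moments :: "nat \<Rightarrow> nat \<Rightarrow> (nat \<Rightarrow> real) \<Rightarrow> nat \<Rightarrow> real" where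
  "moments m M y j = (if j < m then \<Sum>k<M. y k * real k ^ j else 0)"

lemma moments_in_Rn: "m \<le> m' \<Longrightarrow> moments m M y \<in> Rn m'"
  by (simp add: moments_def Rn_def)

lemma continuous_on_moments: "continuous_on UNIV (moments m M)"
proof (rule continuous_on_coordinatewise_then_product)
  fix j
  show "continuous_on UNIV (\<lambda>y. moments m M y j)"
    unfolding moments_def
    by (cases "j < m") (simp_all, intro continuous_intros continuous_on_product_coordinates)
qed

lemma vanishing_moments_imp_zero:
  fixes z :: "nat \<Rightarrow> real"
  assumes "finite S" "card S \<le> m" "\<And>k. k \<notin> S \<Longrightarrow> z k = 0"
    and "\<And>j. j < m \<Longrightarrow> (\<Sum>l\<in>S. z l * real l ^ j) = 0"
  shows "z k = 0"
proof (cases "k \<in> S")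
  case True
  define p where "p = (\<Prod>l\<in>S-{k}. [:- real l, 1:])"
  have poly_p: "poly p x = (\<Prod>l\<in>S-{k}. x - real l)" for x
    by (simp add: p_def poly_prod)
  have "degree p \<le> card (S - {k})"
    unfolding p_def by (rule order.trans[OF degree_prod_sum_le]) (simp_all add: assms(1))
  also have "\<dots> < m"
    using True assms(1,2) by (metis card_Diff1_less order_less_le_trans)
  finally have deg: "degree p < m" .
  have "(\<Sum>l\<in>S. z l * poly p (real l)) = (\<Sum>i\<le>degree p. coeff p i * (\<Sum>l\<in>S. z l * real l ^ i))"
    by (simp add: poly_altdef sum_distrib_left sum.swap[of _ S] mult_ac)
  also have "\<dots> = 0"
    using assms(4) deg by simp
  finally have "(\<Sum>l\<in>S. z l * poly p (real l)) = 0" .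
  moreover have "(\<Sum>l\<in>S. z l * poly p (real l)) = z k * poly p (real k)"
    using True assms(1) by (subst sum.remove[of _ k]) (auto simp: poly_p intro!: sum.neutral)
  moreover have "poly p (real k) \<noteq> 0"
    using assms(1) by (simp add: poly_p)
  ultimately show ?thesis by simp
qed (use assms(3) in simp)

lemma inj_on_moments_sparse: "inj_on (moments (2 * s) M) (sparse_coeffs s M)"
proof (rule inj_onI)
  fix y y' assume y: "y \<in> sparse_coeffs s M" "y' \<in> sparse_coeffs s M"
    and eq: "moments (2 * s) M y = moments (2 * s) M y'"
  define S where "S = {k. y k \<noteq> 0} \<union> {k. y' k \<noteq> 0}"
  have S: "S \<subseteq> {..<M}"
    using y by (auto simp: S_def sparse_coeffs_def)
  then have "finite S"
    by (rule finite_subset) simp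
  have card: "card S \<le> 2 * s"
    using y card_Un_le[of "{k. y k \<noteq> 0}" "{k. y' k \<noteq> 0}"] by (simp add: S_def sparse_coeffs_def)
  have moments: "(\<Sum>l\<in>S. (y l - y' l) * real l ^ j) = 0" if "j < 2 * s" for j
  proof -
    have "(\<Sum>l\<in>S. (y l - y' l) * real l ^ j) = (\<Sum>l<M. (y l - y' l) * real l ^ j)"
      using S \<open>finite S\<close> by (intro sum.mono_neutral_left) (auto simp: S_def)
    also have "\<dots> = moments (2 * s) M y j - moments (2 * s) M y' j"
      using that by (simp add: moments_def left_diff_distrib sum_subtractf)
    finally show ?thesis using eq by simp
  qed
  have "y k - y' k = 0" for k
    using vanishing_moments_imp_zero[where z = "\<lambda>l. y l - y' l", OF \<open>finite S\<close> card _ moments]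
    by (auto simp: S_def)
  then show "y = y'" by auto
qed

section \<open>Soft thresholding at the s-th largest coefficient\<close>

text \<open>For \<open>0 < s \<le> M\<close> this is the \<open>s\<close>-th largest of \<open>\<bar>x 0\<bar>, \<dots>, \<bar>x (M - 1)\<bar>\<close>;
  the max-min form makes its continuity in \<open>x\<close> evident.\<close>

definition kth_largest_abs :: "nat \<Rightarrow> nat \<Rightarrow> (nat \<Rightarrow> real) \<Rightarrow> real" where
  "kth_largest_abs s M x = Max ((\<lambda>S. Min ((\<lambda>k. \<bar>x k\<bar>) ` S)) ` {S. S \<subseteq> {..<M} \<and> card S = s})"

lemma finite_subsets_lessThan_card: "finite {S. S \<subseteq> {..<M::nat} \<and> card S = s}"
  by (rule finite_subset[of _ "Pow {..<M}"]) auto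

lemma Min_abs_le_kth_largest_abs:
  fixes M :: nat
  assumes "S \<subseteq> {..<M}" "card S = s"
  shows "Min ((\<lambda>k. \<bar>x k\<bar>) ` S) \<le> kth_largest_abs s M x"
  unfolding kth_largest_abs_def using assms finite_subsets_lessThan_card[of M s]
  by (intro Max_ge) auto

lemma continuous_on_kth_largest_abs:
  assumes "0 < s" "s \<le> M"
  shows "continuous_on UNIV (kth_largest_abs s M)"
  unfolding kth_largest_abs_def
proof (rule continuous_on_Max_image[OF finite_subsets_lessThan_card])
  have "{..<s} \<in> {S. S \<subseteq> {..<M} \<and> card S = s}"
    using assms by auto
  then show "{S. S \<subseteq> {..<M} \<and> card S = s} \<noteq> {}" by blast
  fix S assume S: "S \<in> {S. S \<subseteq> {..<M} \<and> card S = s}"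
  with assms have "finite S" "S \<noteq> {}"
    using card_gt_0_iff by force+
  then show "continuous_on UNIV (\<lambda>x::nat \<Rightarrow> real. Min ((\<lambda>k. \<bar>x k\<bar>) ` S))"
    by (rule continuous_on_Min_image) (simp add: continuous_on_rabs)
qed

lemma kth_largest_abs_nonneg:
  assumes "0 < s" "s \<le> M"
  shows "0 \<le> kth_largest_abs s M x"
proof -
  have "0 \<le> Min ((\<lambda>k. \<bar>x k\<bar>) ` {..<s})"
    using assms by (subst Min_ge_iff) auto
  also have "\<dots> \<le> kth_largest_abs s M x"
    using assms by (intro Min_abs_le_kth_largest_abs) auto
  finally show ?thesis .
qed

lemma kth_largest_abs_attained:
  assumes "0 < s" "s \<le> M"
  obtains S where "S \<subseteq> {..<M}" "card S = s" "\<And>k. k \<in> S \<Longrightarrow> kth_largest_abs s M x \<le> \<bar>x k\<bar>"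
proof -
  have "kth_largest_abs s M x \<in> (\<lambda>S. Min ((\<lambda>k. \<bar>x k\<bar>) ` S)) ` {S. S \<subseteq> {..<M} \<and> card S = s}"
    unfolding kth_largest_abs_def using assms finite_subsets_lessThan_card
    by (intro Max_in) (auto intro!: exI[of _ "{..<s}"])
  then obtain S where S: "S \<subseteq> {..<M}" "card S = s" "kth_largest_abs s M x = Min ((\<lambda>k. \<bar>x k\<bar>) ` S)"
    by auto
  moreover have "finite S"
    using S(1) by (rule finite_subset) simp
  ultimately show ?thesis
    by (intro that) auto
qed

lemma card_abs_gt_kth_largest_abs:
  fixes M :: nat
  assumes "0 < s"
  shows "card {k. k < M \<and> kth_largest_abs s M x < \<bar>x k\<bar>} < s"
proof (rule ccontr)
  assume "\<not> ?thesis"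
  then obtain S where S: "S \<subseteq> {k. k < M \<and> kth_largest_abs s M x < \<bar>x k\<bar>}" "card S = s"
    by (meson not_less obtain_subset_with_card_n)
  have "finite S"
    using S(1) by (rule finite_subset) auto
  moreover have "S \<noteq> {}"
    using S(2) assms by auto
  ultimately have "kth_largest_abs s M x < Min ((\<lambda>k. \<bar>x k\<bar>) ` S)"
    using S(1) by (subst Min_gr_iff) auto
  moreover have "Min ((\<lambda>k. \<bar>x k\<bar>) ` S) \<le> kth_largest_abs s M x"
    using S by (intro Min_abs_le_kth_largest_abs) auto
  ultimately show False by simp
qed

text \<open>The usual soft thresholding \<open>sgn a * max 0 (\<bar>a\<bar> - t)\<close>, written as \<open>a\<close> minus its
  clipping to \<open>[-t, t]\<close>.\<close>

definition soft_threshold :: "real \<Rightarrow> real \<Rightarrow> real" where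
  "soft_threshold t a = a - max (- t) (min t a)"

lemma soft_threshold_nonzero_imp: "0 \<le> t \<Longrightarrow> soft_threshold t a \<noteq> 0 \<Longrightarrow> t < \<bar>a\<bar>"
  by (auto simp: soft_threshold_def)

lemma abs_soft_threshold_residual:
  assumes "0 \<le> t"
  shows "\<bar>a - soft_threshold t a\<bar> \<le> t" "\<bar>a - soft_threshold t a\<bar> \<le> \<bar>a\<bar>"
  using assms by (auto simp: soft_threshold_def)

definition threshold_coeffs :: "nat \<Rightarrow> nat \<Rightarrow> (nat \<Rightarrow> real) \<Rightarrow> nat \<Rightarrow> real" where
  "threshold_coeffs s M x k = (if k < M then soft_threshold (kth_largest_abs s M x) (x k) else 0)"

lemma continuous_on_threshold_coeffs:
  assumes "0 < s" "s \<le> M"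
  shows "continuous_on UNIV (threshold_coeffs s M)"
proof (rule continuous_on_coordinatewise_then_product)
  fix k
  have "continuous_on UNIV (\<lambda>x. soft_threshold (kth_largest_abs s M x) (x k))"
    unfolding soft_threshold_def
    by (intro continuous_intros continuous_on_product_coordinates
        continuous_on_kth_largest_abs assms)
  then show "continuous_on UNIV (\<lambda>x. threshold_coeffs s M x k)"
    unfolding threshold_coeffs_def by (cases "k < M") simp_all
qed

lemma threshold_coeffs_sparse:
  assumes "0 < s" "s \<le> M"
  shows "threshold_coeffs s M x \<in> sparse_coeffs (s - 1) M"
proof -
  have "{k. threshold_coeffs s M x k \<noteq> 0} \<subseteq> {k. k < M \<and> kth_largest_abs s M x < \<bar>x k\<bar>}"
    using soft_threshold_nonzero_imp[OF kth_largest_abs_nonneg[OF assms]]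
    by (auto simp: threshold_coeffs_def split: if_splits)
  moreover have "card {k. k < M \<and> kth_largest_abs s M x < \<bar>x k\<bar>} \<le> s - 1"
    using card_abs_gt_kth_largest_abs[OF assms(1), of M x] by simp
  ultimately show ?thesis
    unfolding sparse_coeffs_def by (auto dest: card_mono[rotated])
qed

lemma sum_soft_threshold_residual_le:
  fixes x :: "nat \<Rightarrow> real"
  assumes "finite I" "S \<subseteq> I" "finite S0" "2 * card S0 \<le> card S"
    and "0 \<le> t" "\<And>k. k \<in> S \<Longrightarrow> t \<le> \<bar>x k\<bar>"
  shows "(\<Sum>k\<in>I. (x k - soft_threshold t (x k))\<^sup>2) \<le> 2 * (\<Sum>k\<in>I - S0. (x k)\<^sup>2)"
proof -
  txt \<open>Each of the clipped coefficients in \<open>S0\<close> costs at most \<open>t\<^sup>2\<close>, and there are no more of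
    them than indices in \<open>S - S0\<close>, each of which contributes at least \<open>t\<^sup>2\<close> outside \<open>S0\<close>.\<close>
  have residual_sq: "(x k - soft_threshold t (x k))\<^sup>2 \<le> t\<^sup>2"
      "(x k - soft_threshold t (x k))\<^sup>2 \<le> (x k)\<^sup>2" for k
    using abs_soft_threshold_residual[OF assms(5), of "x k"] assms(5)
    by (metis abs_le_square_iff abs_of_nonneg, metis abs_le_square_iff)
  have large: "t\<^sup>2 \<le> (x k)\<^sup>2" if "k \<in> S" for k
    using assms(5) assms(6)[OF that] by (metis abs_le_square_iff abs_of_nonneg)
  have "finite S"
    using assms(1,2) by (rule finite_subset[rotated])
  then have "card S0 \<le> card (S - S0)"
    using assms(4) diff_card_le_card_Diff[OF assms(3), of S] by linarith
  have "(\<Sum>k\<in>I \<inter> S0. (x k - soft_threshold t (x k))\<^sup>2) \<le> real (card (I \<inter> S0)) * t\<^sup>2"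
    using sum_mono[of "I \<inter> S0", OF residual_sq(1)] by simp
  also have "\<dots> \<le> real (card (S - S0)) * t\<^sup>2"
    using card_mono[OF assms(3), of "I \<inter> S0"] \<open>card S0 \<le> card (S - S0)\<close>
    by (intro mult_right_mono) auto
  also have "\<dots> = (\<Sum>k\<in>S - S0. t\<^sup>2)"
    by simp
  also have "\<dots> \<le> (\<Sum>k\<in>S - S0. (x k)\<^sup>2)"
    using large by (intro sum_mono) auto
  also have "\<dots> \<le> (\<Sum>k\<in>I - S0. (x k)\<^sup>2)"
    using assms(1,2) by (intro sum_mono2) auto
  finally have "(\<Sum>k\<in>I \<inter> S0. (x k - soft_threshold t (x k))\<^sup>2) \<le> (\<Sum>k\<in>I - S0. (x k)\<^sup>2)" .
  moreover have "(\<Sum>k\<in>I - S0. (x k - soft_threshold t (x k))\<^sup>2) \<le> (\<Sum>k\<in>I - S0. (x k)\<^sup>2)"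
    using residual_sq(2) by (rule sum_mono)
  ultimately show ?thesis
    using sum.Int_Diff[OF assms(1), of _ S0] by (smt (verit))
qed

section \<open>Continuous encoding by thresholded moments\<close>

lemma sum_scaleR_in_span: "(\<Sum>k<M. y k *\<^sub>R h k) \<in> span (h ` {..<M})"
  by (intro span_sum span_scale span_base) auto

lemma norm_diff_le_via_orthogonal_projection:
  fixes u p a g :: "'a::real_inner"
  assumes "orthogonal (u - p) (p - a)" "orthogonal (u - p) (p - g)"
    and "norm (p - a) \<le> c * norm (p - g)" "1 \<le> c"
  shows "norm (u - a) \<le> c * norm (u - g)"
proof -
  have "(norm (u - a))\<^sup>2 = (norm (u - p))\<^sup>2 + (norm (p - a))\<^sup>2"
    using norm_add_Pythagorean[OF assms(1)] by simp
  also have "\<dots> \<le> c\<^sup>2 * (norm (u - p))\<^sup>2 + (c * norm (p - g))\<^sup>2"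
  proof (intro add_mono power_mono assms(3))
    have "1 \<le> c\<^sup>2"
      using assms(4) by simp
    then show "(norm (u - p))\<^sup>2 \<le> c\<^sup>2 * (norm (u - p))\<^sup>2"
      by (simp add: mult_le_cancel_right1)
  qed simp
  also have "\<dots> = c\<^sup>2 * (norm (u - g))\<^sup>2"
    using norm_add_Pythagorean[OF assms(2)] by (simp add: power_mult_distrib distrib_left)
  finally have "(norm (u - a))\<^sup>2 \<le> (c * norm (u - g))\<^sup>2"
    by (simp only: power_mult_distrib)
  then show ?thesis
    by (rule power2_le_imp_le) (use assms(4) in simp)
qed

lemma sum_sq_threshold_residual_le:
  assumes "2 * n + 1 \<le> M" "d \<in> sparse_coeffs n M"
  shows "(\<Sum>k<M. (x k - threshold_coeffs (2 * n + 1) M x k)\<^sup>2) \<le> 2 * (\<Sum>k<M. (x k - d k)\<^sup>2)"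
proof -
  define t where "t = kth_largest_abs (2 * n + 1) M x"
  obtain S where S: "S \<subseteq> {..<M}" "card S = 2 * n + 1" "\<And>k. k \<in> S \<Longrightarrow> t \<le> \<bar>x k\<bar>"
    using kth_largest_abs_attained[of "2 * n + 1" M] assms(1) unfolding t_def by auto
  define S0 where "S0 = {k. d k \<noteq> 0}"
  have S0: "S0 \<subseteq> {..<M}" "card S0 \<le> n"
    using assms(2) by (simp_all add: sparse_coeffs_def S0_def)
  have "(\<Sum>k<M. (x k - threshold_coeffs (2 * n + 1) M x k)\<^sup>2)
      = (\<Sum>k<M. (x k - soft_threshold t (x k))\<^sup>2)"
    by (simp add: threshold_coeffs_def t_def)
  also have "\<dots> \<le> 2 * (\<Sum>k\<in>{..<M} - S0. (x k)\<^sup>2)"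
    using S S0 assms(1) kth_largest_abs_nonneg[of "2 * n + 1" M x] finite_subset[OF S0(1)]
    by (intro sum_soft_threshold_residual_le) (auto simp: t_def)
  also have "(\<Sum>k\<in>{..<M} - S0. (x k)\<^sup>2) = (\<Sum>k\<in>{..<M} - S0. (x k - d k)\<^sup>2)"
    by (intro sum.cong) (auto simp: S0_def)
  also have "\<dots> \<le> (\<Sum>k<M. (x k - d k)\<^sup>2)"
    by (intro sum_mono2) auto
  finally show ?thesis by simp
qed

lemma threshold_coeffs_approximation:
  fixes h :: "nat \<Rightarrow> 'a::real_inner" and x d :: "nat \<Rightarrow> real"
  assumes h: "riesz_basis h" "riesz_B h \<le> C * riesz_A h"
    and M: "2 * n + 1 \<le> M"
    and orth: "\<And>v. v \<in> span (h ` {..<M}) \<Longrightarrow> orthogonal (u - (\<Sum>k<M. x k *\<^sub>R h k)) v"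
    and d: "d \<in> sparse_coeffs n M"
  shows "norm (u - (\<Sum>k<M. threshold_coeffs (2 * n + 1) M x k *\<^sub>R h k))
    \<le> sqrt 2 * C * norm (u - (\<Sum>k<M. d k *\<^sub>R h k))"
proof -
  define p where "p = (\<Sum>k<M. x k *\<^sub>R h k)"
  define a where "a = (\<Sum>k<M. threshold_coeffs (2 * n + 1) M x k *\<^sub>R h k)"
  define g where "g = (\<Sum>k<M. d k *\<^sub>R h k)"
  have C: "1 \<le> C"
    using h by (rule riesz_ratio_bound_ge_1)
  have pa: "p - a = (\<Sum>k<M. (x k - threshold_coeffs (2 * n + 1) M x k) *\<^sub>R h k)"
    by (simp add: p_def a_def scaleR_diff_left sum_subtractf)
  have pg: "p - g = (\<Sum>k<M. (x k - d k) *\<^sub>R h k)"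
    by (simp add: p_def g_def scaleR_diff_left sum_subtractf)
  have "norm (p - a) \<le> riesz_B h * sqrt (\<Sum>k<M. (x k - threshold_coeffs (2 * n + 1) M x k)\<^sup>2)"
    unfolding pa by (rule riesz_basis_bounds(2)[OF h(1)]) simp
  also have "\<dots> \<le> riesz_B h * sqrt (2 * (\<Sum>k<M. (x k - d k)\<^sup>2))"
    using sum_sq_threshold_residual_le[OF M d] riesz_A_le_B[OF h(1)] h(1)
    by (intro mult_left_mono) (auto simp: riesz_basis_def)
  also have "\<dots> \<le> sqrt 2 * C * (riesz_A h * sqrt (\<Sum>k<M. (x k - d k)\<^sup>2))"
    using mult_right_mono[OF h(2), of "sqrt 2 * sqrt (\<Sum>k<M. (x k - d k)\<^sup>2)"]
    by (simp add: real_sqrt_mult sum_nonneg mult_ac)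
  also have "\<dots> \<le> sqrt 2 * C * norm (p - g)"
    unfolding pg using C by (intro mult_left_mono riesz_basis_bounds(1)[OF h(1)]) auto
  finally have pa_le: "norm (p - a) \<le> sqrt 2 * C * norm (p - g)" .
  have "orthogonal (u - p) (p - a)" "orthogonal (u - p) (p - g)"
    unfolding p_def a_def g_def by (intro orth span_diff sum_scaleR_in_span)+
  moreover note pa_le
  moreover have "1 \<le> sqrt 2 * C"
    using C mult_mono[of 1 "sqrt 2" 1 C] by simp
  ultimately show ?thesis
    unfolding a_def g_def by (rule norm_diff_le_via_orthogonal_projection)
qed

lemma sigma_n_lessE:
  assumes "sigma_n n u h < ennreal \<delta>"
  obtains i c where "norm (u - (\<Sum>k<n. c k *\<^sub>R h (i k))) < \<delta>"
  using assms unfolding sigma_n_def by (auto simp: INF_less_iff ennreal_less_iff)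

lemma n_term_sum_eq_sparse_sum:
  fixes h :: "nat \<Rightarrow> 'a::real_vector"
  assumes "i ` {..<n} \<subseteq> {..<M}"
  obtains d where "d \<in> sparse_coeffs n M" "(\<Sum>k<n. c k *\<^sub>R h (i k)) = (\<Sum>j<M. d j *\<^sub>R h j)"
proof
  define d where "d j = (\<Sum>k\<in>{k\<in>{..<n}. i k = j}. c k)" for j
  have supp: "{j. d j \<noteq> 0} \<subseteq> i ` {..<n}"
    by (auto simp: d_def elim: sum.not_neutral_contains_not_neutral)
  then show "d \<in> sparse_coeffs n M"
    using assms card_image_le[of "{..<n}" i] card_mono[OF finite_imageI supp]
    by (auto simp: sparse_coeffs_def)
  have "(\<Sum>k<n. c k *\<^sub>R h (i k)) = (\<Sum>j\<in>i ` {..<n}. \<Sum>k\<in>{k\<in>{..<n}. i k = j}. c k *\<^sub>R h (i k))"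
    by (rule sum.image_gen) simp
  also have "\<dots> = (\<Sum>j\<in>i ` {..<n}. d j *\<^sub>R h j)"
    unfolding d_def scaleR_sum_left by (intro sum.cong) auto
  also have "\<dots> = (\<Sum>j<M. d j *\<^sub>R h j)"
    using assms supp by (intro sum.mono_neutral_left) auto
  finally show "(\<Sum>k<n. c k *\<^sub>R h (i k)) = (\<Sum>j<M. d j *\<^sub>R h j)" .
qed

lemma compact_sparse_approximation:
  fixes h :: "nat \<Rightarrow> 'a::real_normed_vector"
  assumes "compact K" "\<And>u. u \<in> K \<Longrightarrow> \<exists>i c. norm (u - (\<Sum>k<n. c k *\<^sub>R h (i k))) < \<delta>"
  obtains M where "m \<le> M" "\<And>u. u \<in> K \<Longrightarrow> \<exists>d\<in>sparse_coeffs n M. norm (u - (\<Sum>k<M. d k *\<^sub>R h k)) < \<delta>"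
proof -
  obtain i c where ic: "\<And>u. u \<in> K \<Longrightarrow> norm (u - (\<Sum>k<n. c u k *\<^sub>R h (i u k))) < \<delta>"
    using assms(2) by metis
  define g where "g u = (\<Sum>k<n. c u k *\<^sub>R h (i u k))" for u
  have "K \<subseteq> (\<Union>u\<in>K. ball (g u) \<delta>)"
    using ic by (force simp: g_def dist_norm norm_minus_commute)
  then obtain J where J: "J \<subseteq> K" "finite J" "K \<subseteq> (\<Union>w\<in>J. ball (g w) \<delta>)"
    using compactE_image[OF assms(1)] by (metis open_ball)
  define M where "M = max m (Suc (Max (insert 0 ((\<lambda>(w, k). i w k) ` (J \<times> {..<n})))))"
  have "i w k \<le> Max (insert 0 ((\<lambda>(w, k). i w k) ` (J \<times> {..<n})))" if "w \<in> J" "k < n" for w k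
    using that J(2) by (intro Max_ge) auto
  then have indices: "i w ` {..<n} \<subseteq> {..<M}" if "w \<in> J" for w
    using that by (fastforce simp: M_def)
  show ?thesis
  proof (rule that)
    show "m \<le> M" by (simp add: M_def)
    fix u assume "u \<in> K"
    then obtain w where "w \<in> J" "norm (u - g w) < \<delta>"
      using J(3) by (auto simp: dist_norm norm_minus_commute)
    moreover obtain d where "d \<in> sparse_coeffs n M" "g w = (\<Sum>k<M. d k *\<^sub>R h k)"
      using n_term_sum_eq_sparse_sum[OF indices[OF \<open>w \<in> J\<close>]] unfolding g_def by metis
    ultimately show "\<exists>d\<in>sparse_coeffs n M. norm (u - (\<Sum>k<M. d k *\<^sub>R h k)) < \<delta>"
      by auto
  qed
qed

lemma continuous_decoder_of_moments:
  fixes h :: "nat \<Rightarrow> 'a::real_inner"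
  assumes "compact Q" "Q \<subseteq> sparse_coeffs s M"
  obtains \<phi> where "continuous_on UNIV \<phi>"
    "\<And>y. y \<in> Q \<Longrightarrow> \<phi> (moments (2 * s) M y) = (\<Sum>k<M. y k *\<^sub>R h k)"
proof -
  have "continuous_on Q (moments (2 * s) M)"
    by (rule continuous_on_subset[OF continuous_on_moments]) simp
  moreover have "inj_on (moments (2 * s) M) Q"
    using inj_on_moments_sparse assms(2) by (rule inj_on_subset)
  moreover have "continuous_on Q (\<lambda>y. \<Sum>k<M. y k *\<^sub>R h k)"
    by (rule continuous_on_subset[of UNIV])
      (intro continuous_intros continuous_on_product_coordinates, simp)
  ultimately show ?thesis
    using continuous_factor_through_inj_on[OF assms(1)] that by blast
qed

lemma e_cont_le_ennreal:
  assumes "continuous_on K N" "N ` K \<subseteq> Rn m" "continuous_on (Rn m) \<phi>"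
    and "\<And>u. u \<in> K \<Longrightarrow> norm (\<phi> (N u) - u) \<le> r"
  shows "e_cont m K \<le> ennreal r"
proof -
  have "e_cont m K \<le> (SUP u\<in>K. ennreal (norm (\<phi> (N u) - u)))"
    unfolding e_cont_def using assms(1-3) by (intro INF_lower2[of "(N, \<phi>)"]) auto
  also have "\<dots> \<le> ennreal r"
    using assms(4) by (intro SUP_least ennreal_leI)
  finally show ?thesis .
qed

lemma e_cont_le_of_riesz_basis:
  fixes K :: "'a::real_inner set" and h :: "nat \<Rightarrow> 'a"
  assumes K: "compact K" and h: "riesz_basis h" "riesz_B h \<le> C * riesz_A h"
    and \<delta>: "(SUP u\<in>K. sigma_n n u h) < ennreal \<delta>"
  shows "e_cont (4 * n + 1) K \<le> ennreal (2 * C * \<delta>)"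
proof -
  have "\<exists>i c. norm (u - (\<Sum>k<n. c k *\<^sub>R h (i k))) < \<delta>" if "u \<in> K" for u
    using sigma_n_lessE[OF le_less_trans[OF SUP_upper[OF that] \<delta>]] by blast
  then obtain M where M: "2 * n + 1 \<le> M"
    and approx: "\<And>u. u \<in> K \<Longrightarrow> \<exists>d\<in>sparse_coeffs n M. norm (u - (\<Sum>k<M. d k *\<^sub>R h k)) < \<delta>"
    using compact_sparse_approximation[OF K, where m = "2 * n + 1"] by blast
  obtain c where c: "continuous_on UNIV c"
    and orth: "\<And>u v. v \<in> span (h ` {..<M}) \<Longrightarrow> orthogonal (u - (\<Sum>k<M. c u k *\<^sub>R h k)) v"
    using continuous_projection_coefficients[of h M] by blast
  define T where "T = threshold_coeffs (2 * n + 1) M"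
  define L where "L = moments (2 * (2 * n)) M"
  have T: "continuous_on UNIV T" "\<And>x. T x \<in> sparse_coeffs (2 * n) M"
    using M continuous_on_threshold_coeffs[of "2 * n + 1" M]
      threshold_coeffs_sparse[of "2 * n + 1" M]
    by (simp_all add: T_def)
  have contTc: "continuous_on K (T \<circ> c)"
    by (intro continuous_on_compose continuous_on_subset[OF c] continuous_on_subset[OF T(1)]) auto
  have Q: "compact ((T \<circ> c) ` K)" "(T \<circ> c) ` K \<subseteq> sparse_coeffs (2 * n) M"
    using compact_continuous_image[OF contTc K] T(2) by auto
  obtain \<phi> where \<phi>: "continuous_on UNIV \<phi>"
    "\<And>y. y \<in> (T \<circ> c) ` K \<Longrightarrow> \<phi> (L y) = (\<Sum>k<M. y k *\<^sub>R h k)"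
    using continuous_decoder_of_moments[where h = h, OF Q] unfolding L_def by blast
  show ?thesis
  proof (rule e_cont_le_ennreal)
    show "continuous_on K (L \<circ> T \<circ> c)"
      unfolding L_def o_assoc[symmetric]
      by (intro continuous_on_compose contTc continuous_on_subset[OF continuous_on_moments]) simp
    show "(L \<circ> T \<circ> c) ` K \<subseteq> Rn (4 * n + 1)"
      by (auto simp: L_def intro: moments_in_Rn)
    show "continuous_on (Rn (4 * n + 1)) \<phi>"
      using \<phi>(1) by (rule continuous_on_subset) simp
    fix u assume "u \<in> K"
    then obtain d where d: "d \<in> sparse_coeffs n M" "norm (u - (\<Sum>k<M. d k *\<^sub>R h k)) < \<delta>"
      using approx by blast
    have "\<phi> ((L \<circ> T \<circ> c) u) = (\<Sum>k<M. T (c u) k *\<^sub>R h k)"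
      using \<phi>(2) \<open>u \<in> K\<close> by simp
    then have "norm (\<phi> ((L \<circ> T \<circ> c) u) - u) = norm (u - (\<Sum>k<M. T (c u) k *\<^sub>R h k))"
      by (simp add: norm_minus_commute)
    also have "\<dots> \<le> sqrt 2 * C * norm (u - (\<Sum>k<M. d k *\<^sub>R h k))"
      unfolding T_def using h M orth d(1) by (rule threshold_coeffs_approximation)
    also have "\<dots> \<le> 2 * C * \<delta>"
      using d(2) riesz_ratio_bound_ge_1[OF h] sqrt2_less_2 by (intro mult_mono) auto
    finally show "norm (\<phi> ((L \<circ> T \<circ> c) u) - u) \<le> 2 * C * \<delta>" .
  qed
qed

theorem proposition1:
  fixes K :: "'a::{real_inner, complete_space} set" and C :: real and n :: nat
  assumes "compact K" and "C \<ge> 1"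
  shows "e_cont (4 * n + 1) K \<le> ennreal (2 * C) * e_non n C K"
proof (cases "e_non n C K = top")
  case True
  then show ?thesis
    using assms(2) by (simp add: ennreal_mult_top)
next
  case False
  then obtain r where r: "e_non n C K = ennreal r" "0 \<le> r"
    by (cases "e_non n C K") auto
  show ?thesis
  proof (rule ennreal_le_epsilon)
    fix \<epsilon> :: real assume "0 < \<epsilon>"
    define \<delta> where "\<delta> = r + \<epsilon> / (2 * C)"
    have "e_non n C K < ennreal \<delta>"
      using r \<open>0 < \<epsilon>\<close> assms(2) by (simp add: \<delta>_def ennreal_less_iff)
    then obtain h where h: "h \<in> riesz_bases_C C" "(SUP u\<in>K. sigma_n n u h) < ennreal \<delta>"
      unfolding e_non_def by (auto simp: INF_less_iff)
    have "e_cont (4 * n + 1) K \<le> ennreal (2 * C * \<delta>)"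
      using assms(1) riesz_bases_CD[OF h(1)] h(2) by (rule e_cont_le_of_riesz_basis)
    also have "2 * C * \<delta> = 2 * C * r + \<epsilon>"
      using assms(2) by (simp add: \<delta>_def field_simps)
    also have "ennreal (2 * C * r + \<epsilon>) = ennreal (2 * C) * e_non n C K + ennreal \<epsilon>"
      using r \<open>0 < \<epsilon>\<close> assms(2) by (simp add: ennreal_mult)
    finally show "e_cont (4 * n + 1) K \<le> ennreal (2 * C) * e_non n C K + ennreal \<epsilon>" .
  qed
qed

end
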